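(* Let $G$ be a finitely generated group. If $IP_{Rat}(G\rtimes\mathbb{Z})$ is decidable, then $GBrP_{Rat}(G)$ is decidable.
   Context: For $\phi\in\mathrm{Aut}(G)$, $G\rtimes_\phi\mathbb{Z}$ is the group generated by $G$ and $t$ with $t^{-1}at=\phi(a)$ for $a\in G$. A subset of a finitely generated group is rational if it is the image of a rational (regular) language over the generators and their inverses (given by a finite automaton). $IP_{Rat}(G\rtimes\mathbb{Z})$: given $\phi\in\mathrm{Aut}(G)$ and two rational subsets of $G\rtimes_\phi\mathbb{Z}$, decide whether they intersect. $GBrP_{Rat}(G)$: given a rational subset $K\subseteq G$, $\phi\in\mathrm{Aut}(G)$ and $x\in G$, decide whether there exists $k$ with $\phi^k(x)\in K$. *)

theory Defs
  imports "HOL-Algebra.Generated_Groups" "HOL-Library.Nat_Bijection"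
begin

datatype recf = Zero | Succ | Proj nat | Comp recf "recf list" | Prim recf recf | Mini recf

inductive rf_eval :: "recf \<Rightarrow> nat list \<Rightarrow> nat \<Rightarrow> bool" where
  zero: "rf_eval Zero xs 0"
| succ: "rf_eval Succ (x # xs) (Suc x)"
| proj: "i < length xs \<Longrightarrow> rf_eval (Proj i) xs (xs ! i)"
| comp: "length ys = length gs \<Longrightarrow> (\<forall>i < length gs. rf_eval (gs ! i) xs (ys ! i))
          \<Longrightarrow> rf_eval f ys z \<Longrightarrow> rf_eval (Comp f gs) xs z"
| prim0: "rf_eval g xs y \<Longrightarrow> rf_eval (Prim g h) (0 # xs) y"
| primS: "rf_eval (Prim g h) (n # xs) y \<Longrightarrow> rf_eval h (y # n # xs) z
          \<Longrightarrow> rf_eval (Prim g h) (Suc n # xs) z"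
| mini: "rf_eval f (n # xs) 0 \<Longrightarrow> (\<forall>m < n. \<exists>y. rf_eval f (m # xs) (Suc y))
          \<Longrightarrow> rf_eval (Mini f) xs n"

text \<open>A letter over a generating list of length n is a code c < 2n:
  generator number c div 2, inverted iff c is odd.\<close>

definition word_ok :: "nat \<Rightarrow> nat list \<Rightarrow> bool" where
  "word_ok n w \<longleftrightarrow> (\<forall>c \<in> set w. c < 2 * n)"

type_synonym nfa = "(nat \<times> nat \<times> nat) list \<times> nat \<times> nat list"

fun nfa_run :: "(nat \<times> nat \<times> nat) list \<Rightarrow> nat \<Rightarrow> nat list \<Rightarrow> nat \<Rightarrow> bool" where
  "nfa_run ts p [] q \<longleftrightarrow> p = q"
| "nfa_run ts p (a # w) q \<longleftrightarrow> (\<exists>p'. (p, a, p') \<in> set ts \<and> nfa_run ts p' w q)"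

fun nfa_accepts :: "nfa \<Rightarrow> nat list \<Rightarrow> bool" where
  "nfa_accepts (ts, q0, fs) w \<longleftrightarrow> (\<exists>q \<in> set fs. nfa_run ts q0 w q)"

fun nfa_ok :: "nat \<Rightarrow> nfa \<Rightarrow> bool" where
  "nfa_ok n (ts, q0, fs) \<longleftrightarrow> (\<forall>(p, a, q) \<in> set ts. a < 2 * n)"

fun enc_nfa :: "nfa \<Rightarrow> nat" where
  "enc_nfa (ts, q0, fs) =
     prod_encode (list_encode (map (\<lambda>(p, a, q). prod_encode (p, prod_encode (a, q))) ts),
                  prod_encode (q0, list_encode fs))"

definition enc_aut :: "nat list list \<Rightarrow> nat" where
  "enc_aut ws = list_encode (map list_encode ws)"

definition gen_letter :: "('a, 'b) monoid_scheme \<Rightarrow> 'a list \<Rightarrow> nat \<Rightarrow> 'a" where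
  "gen_letter G gens c =
     (if odd c then inv\<^bsub>G\<^esub> (gens ! (c div 2)) else gens ! (c div 2))"

definition eval_word :: "('a, 'b) monoid_scheme \<Rightarrow> 'a list \<Rightarrow> nat list \<Rightarrow> 'a" where
  "eval_word G gens w = foldr (\<lambda>c acc. gen_letter G gens c \<otimes>\<^bsub>G\<^esub> acc) w \<one>\<^bsub>G\<^esub>"

definition rat_set :: "('a, 'b) monoid_scheme \<Rightarrow> 'a list \<Rightarrow> nfa \<Rightarrow> 'a set" where
  "rat_set G gens A = eval_word G gens ` {w. nfa_accepts A w}"

definition aut_pow :: "('a, 'b) monoid_scheme \<Rightarrow> ('a \<Rightarrow> 'a) \<Rightarrow> int \<Rightarrow> 'a \<Rightarrow> 'a" where
  "aut_pow G \<phi> k = (if 0 \<le> k then \<phi> ^^ nat k else inv_into (carrier G) \<phi> ^^ nat (- k))"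

text \<open>Elements of G \<rtimes>_\<phi> Z in normal form g t^m, represented as (g, m).
  Since t^{-1} a t = \<phi>(a), we have t^m h = \<phi>^{-m}(h) t^m.\<close>
definition sd_mult :: "('a, 'b) monoid_scheme \<Rightarrow> ('a \<Rightarrow> 'a) \<Rightarrow> 'a \<times> int \<Rightarrow> 'a \<times> int \<Rightarrow> 'a \<times> int" where
  "sd_mult G \<phi> x y = (fst x \<otimes>\<^bsub>G\<^esub> aut_pow G \<phi> (- snd x) (fst y), snd x + snd y)"

text \<open>Generators of G \<rtimes> Z: those of G (numbers < length gens) and t (number length gens).\<close>
definition sd_letter :: "('a, 'b) monoid_scheme \<Rightarrow> 'a list \<Rightarrow> nat \<Rightarrow> 'a \<times> int" where
  "sd_letter G gens c =
     (if c div 2 = length gens then (\<one>\<^bsub>G\<^esub>, if odd c then -1 else 1)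
      else (gen_letter G gens c, 0))"

definition sd_eval :: "('a, 'b) monoid_scheme \<Rightarrow> ('a \<Rightarrow> 'a) \<Rightarrow> 'a list \<Rightarrow> nat list \<Rightarrow> 'a \<times> int" where
  "sd_eval G \<phi> gens w = foldr (\<lambda>c acc. sd_mult G \<phi> (sd_letter G gens c) acc) w (\<one>\<^bsub>G\<^esub>, 0)"

definition sd_rat_set :: "('a, 'b) monoid_scheme \<Rightarrow> ('a \<Rightarrow> 'a) \<Rightarrow> 'a list \<Rightarrow> nfa \<Rightarrow> ('a \<times> int) set" where
  "sd_rat_set G \<phi> gens A = sd_eval G \<phi> gens ` {w. nfa_accepts A w}"

definition represents :: "('a, 'b) monoid_scheme \<Rightarrow> 'a list \<Rightarrow> nat list list \<Rightarrow> ('a \<Rightarrow> 'a) \<Rightarrow> bool" where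
  "represents G gens ws \<phi> \<longleftrightarrow> \<phi> \<in> iso G G \<and> length ws = length gens \<and>
     (\<forall>w \<in> set ws. word_ok (length gens) w) \<and>
     (\<forall>i < length gens. \<phi> (gens ! i) = eval_word G gens (ws ! i))"

definition IP_Rat_sd_decidable :: "('a, 'b) monoid_scheme \<Rightarrow> 'a list \<Rightarrow> bool" where
  "IP_Rat_sd_decidable G gens \<longleftrightarrow> (\<exists>M. \<forall>\<phi> ws A B.
     represents G gens ws \<phi> \<and> nfa_ok (Suc (length gens)) A \<and> nfa_ok (Suc (length gens)) B \<longrightarrow>
     rf_eval M [prod_encode (enc_aut ws, prod_encode (enc_nfa A, enc_nfa B))]
       (if sd_rat_set G \<phi> gens A \<inter> sd_rat_set G \<phi> gens B \<noteq> {} then 1 else 0))"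

definition GBrP_Rat_decidable :: "('a, 'b) monoid_scheme \<Rightarrow> 'a list \<Rightarrow> bool" where
  "GBrP_Rat_decidable G gens \<longleftrightarrow> (\<exists>M. \<forall>K \<phi> ws x.
     nfa_ok (length gens) K \<and> represents G gens ws \<phi> \<and> word_ok (length gens) x \<longrightarrow>
     rf_eval M [prod_encode (enc_nfa K, prod_encode (enc_aut ws, list_encode x))]
       (if \<exists>k::nat. (\<phi> ^^ k) (eval_word G gens x) \<in> rat_set G gens K then 1 else 0))"

end

theory Submission
  imports Defs "HOL-Library.Sublist"
begin

text \<open>Since \<open>t\<inverse> a t = \<phi>(a)\<close>, the word \<open>t\<^sup>-\<^sup>i x t\<^sup>j\<close> over the generators of
  \<open>G \<rtimes>\<^sub>\<phi> \<int>\<close> evaluates to the normal form \<open>(\<phi>\<^sup>i(x), j - i)\<close>, while a word over the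
  generators of \<open>G\<close> evaluates to some \<open>(g, 0)\<close>. So the rational set
  \<open>{t\<^sup>-\<^sup>i x t\<^sup>j | i, j \<ge> 0}\<close> meets a rational subset \<open>K\<close> of \<open>G\<close> exactly when
  \<open>\<phi>\<^sup>i(x) \<in> K\<close> for some \<open>i\<close>. An automaton for this set is computed from \<open>x\<close> by a
  primitive recursion over the suffixes of \<open>x\<close>; composing this computation with a decider for
  the intersection problem decides the generalized Brinkmann problem.\<close>

section \<open>Recursive functions on codes\<close>

lemma rf_eval_eq: "rf_eval f xs y \<Longrightarrow> y = z \<Longrightarrow> rf_eval f xs z"
  by simp

lemma rf_eval_Proj0: "rf_eval (Proj 0) (x # xs) x"
  using rf_eval.proj[of 0 "x # xs"] by simp

lemma rf_eval_Proj1: "rf_eval (Proj 1) (x # y # xs) y"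
  using rf_eval.proj[of 1 "x # y # xs"] by simp

lemma rf_eval_Proj2: "rf_eval (Proj 2) (x # y # z # xs) z"
  using rf_eval.proj[of 2 "x # y # z # xs"] by simp

lemma rf_eval_ProjI: "i < length xs \<Longrightarrow> xs ! i = y \<Longrightarrow> rf_eval (Proj i) xs y"
  using rf_eval.proj by blast

lemma rf_eval_Comp1: "rf_eval g xs a \<Longrightarrow> rf_eval f [a] y \<Longrightarrow> rf_eval (Comp f [g]) xs y"
  by (rule rf_eval.comp[where ys = "[a]"]) auto

lemma rf_eval_Comp2:
  "rf_eval g1 xs a \<Longrightarrow> rf_eval g2 xs b \<Longrightarrow> rf_eval f [a, b] y \<Longrightarrow> rf_eval (Comp f [g1, g2]) xs y"
  by (rule rf_eval.comp[where ys = "[a, b]"]) (auto simp: less_Suc_eq)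

lemma rf_eval_Comp3:
  "rf_eval g1 xs a \<Longrightarrow> rf_eval g2 xs b \<Longrightarrow> rf_eval g3 xs c \<Longrightarrow> rf_eval f [a, b, c] y \<Longrightarrow>
    rf_eval (Comp f [g1, g2, g3]) xs y"
  by (rule rf_eval.comp[where ys = "[a, b, c]"]) (auto simp: less_Suc_eq)

lemma rf_eval_Succ: "rf_eval g xs a \<Longrightarrow> rf_eval (Comp Succ [g]) xs (Suc a)"
  by (rule rf_eval_Comp1) (auto intro: rf_eval.succ)

fun rf_const :: "nat \<Rightarrow> recf" where
  "rf_const 0 = Zero"
| "rf_const (Suc k) = Comp Succ [rf_const k]"

lemma rf_eval_const: "rf_eval (rf_const k) xs k"
  by (induction k) (auto intro: rf_eval.zero rf_eval_Succ)

definition rf_add :: recf where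
  "rf_add = Prim (Proj 0) (Comp Succ [Proj 0])"

lemma rf_eval_add: "rf_eval g1 xs a \<Longrightarrow> rf_eval g2 xs b \<Longrightarrow> rf_eval (Comp rf_add [g1, g2]) xs (a + b)"
proof (erule rf_eval_Comp2, assumption)
  show "rf_eval rf_add [a, b] (a + b)"
    by (induction a) (auto simp: rf_add_def intro: rf_eval.prim0 rf_eval.primS rf_eval_Proj0 rf_eval_Succ)
qed

definition rf_triangle :: recf where
  "rf_triangle = Prim Zero (Comp rf_add [Proj 0, Comp Succ [Proj 1]])"

lemma rf_eval_triangle: "rf_eval g xs a \<Longrightarrow> rf_eval (Comp rf_triangle [g]) xs (triangle a)"
proof (erule rf_eval_Comp1)
  show "rf_eval rf_triangle [a] (triangle a)"
  proof (induction a)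
    case (Suc a)
    have "rf_eval (Comp rf_add [Proj 0, Comp Succ [Proj 1]]) [triangle a, a] (triangle a + Suc a)"
      by (intro rf_eval_add rf_eval_Proj0 rf_eval_Succ rf_eval_Proj1)
    with Suc show ?case
      by (auto simp: rf_triangle_def intro: rf_eval.primS)
  qed (auto simp: rf_triangle_def intro: rf_eval.prim0 rf_eval.zero)
qed

definition rf_prod_encode :: recf where
  "rf_prod_encode = Comp rf_add [Comp rf_triangle [Comp rf_add [Proj 0, Proj 1]], Proj 0]"

lemma rf_eval_prod_encode:
  "rf_eval g1 xs a \<Longrightarrow> rf_eval g2 xs b \<Longrightarrow> rf_eval (Comp rf_prod_encode [g1, g2]) xs (prod_encode (a, b))"
  unfolding rf_prod_encode_def prod_encode_def case_prod_conv
  by (erule rf_eval_Comp2, assumption)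
    (intro rf_eval_add rf_eval_triangle rf_eval_Proj0 rf_eval_Proj1)

definition rf_pred :: recf where
  "rf_pred = Prim Zero (Proj 1)"

lemma rf_eval_pred: "rf_eval g xs a \<Longrightarrow> rf_eval (Comp rf_pred [g]) xs (a - 1)"
proof (erule rf_eval_Comp1)
  show "rf_eval rf_pred [a] (a - 1)"
  proof (induction a)
    case (Suc a)
    have "rf_eval rf_pred [Suc a] a"
      unfolding rf_pred_def by (rule rf_eval.primS[OF Suc.IH[unfolded rf_pred_def] rf_eval_Proj1])
    then show ?case
      by simp
  qed (auto simp: rf_pred_def intro: rf_eval.prim0 rf_eval.zero)
qed

text \<open>The arguments of \<open>rf_diff\<close> come in reverse order: it recurses on the subtrahend.\<close>

definition rf_diff :: recf where
  "rf_diff = Prim (Proj 0) (Comp rf_pred [Proj 0])"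

lemma rf_eval_diff: "rf_eval g1 xs a \<Longrightarrow> rf_eval g2 xs b \<Longrightarrow> rf_eval (Comp rf_diff [g2, g1]) xs (a - b)"
proof (rule rf_eval_Comp2, assumption+)
  show "rf_eval rf_diff [b, a] (a - b)"
  proof (induction b)
    case (Suc b)
    have "rf_eval (Comp rf_pred [Proj 0]) [a - b, b, a] (a - Suc b)"
      by (rule rf_eval_eq[OF rf_eval_pred[OF rf_eval_Proj0]]) simp
    with Suc show ?case
      unfolding rf_diff_def by (rule rf_eval.primS)
  qed (auto simp: rf_diff_def intro: rf_eval.prim0 rf_eval_Proj0)
qed

text \<open>The search finds the least \<open>s\<close> with \<open>z < triangle (Suc s)\<close>, which is \<open>a + b\<close> for
  \<open>z = prod_encode (a, b) = triangle (a + b) + a\<close>.\<close>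

definition rf_decode_sum :: recf where
  "rf_decode_sum = Mini (Comp rf_diff [Comp rf_triangle [Comp Succ [Proj 0]], Comp Succ [Proj 1]])"

lemma rf_eval_decode_sum: "rf_eval rf_decode_sum [z] (fst (prod_decode z) + snd (prod_decode z))"
proof -
  obtain a b where ab: "prod_decode z = (a, b)"
    by fastforce
  have z: "z = triangle (a + b) + a"
    using prod_decode_inverse[of z] by (simp add: ab prod_encode_def)
  let ?f = "Comp rf_diff [Comp rf_triangle [Comp Succ [Proj 0]], Comp Succ [Proj 1]]"
  have f: "rf_eval ?f [s, z] (Suc z - triangle (Suc s))" for s
    by (rule rf_eval_diff[OF rf_eval_Succ[OF rf_eval_Proj1] rf_eval_triangle[OF rf_eval_Succ[OF rf_eval_Proj0]]])
  have triangle_mono: "triangle m \<le> triangle n" if "m \<le> n" for m n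
    using that by (induction n rule: dec_induct) auto
  have below: "triangle (Suc m) \<le> z" if "m < a + b" for m
    using triangle_mono[of "Suc m" "a + b"] that z by simp
  show ?thesis
    unfolding rf_decode_sum_def ab fst_conv snd_conv
  proof (rule rf_eval.mini)
    show "rf_eval ?f [a + b, z] 0"
      using f[of "a + b"] z by simp
    show "\<forall>m < a + b. \<exists>y. rf_eval ?f [m, z] (Suc y)"
    proof (intro allI impI)
      fix m
      assume "m < a + b"
      then have "Suc z - triangle (Suc m) = Suc (z - triangle (Suc m))"
        by (intro Suc_diff_le below)
      then show "\<exists>y. rf_eval ?f [m, z] (Suc y)"
        using f[of m] by (intro exI[of _ "z - triangle (Suc m)"]) simp
    qed
  qed
qed

definition rf_fst_decode :: recf where
  "rf_fst_decode = Comp rf_diff [Comp rf_triangle [rf_decode_sum], Proj 0]"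

definition rf_snd_decode :: recf where
  "rf_snd_decode = Comp rf_diff [Comp rf_fst_decode [Proj 0], rf_decode_sum]"

lemma rf_eval_fst_decode: "rf_eval g xs z \<Longrightarrow> rf_eval (Comp rf_fst_decode [g]) xs (fst (prod_decode z))"
proof (erule rf_eval_Comp1)
  obtain a b where ab: "prod_decode z = (a, b)"
    by fastforce
  moreover have "z = triangle (a + b) + a"
    using prod_decode_inverse[of z] ab by (simp add: prod_encode_def)
  ultimately have "z - triangle (fst (prod_decode z) + snd (prod_decode z)) = fst (prod_decode z)"
    by simp
  then show "rf_eval rf_fst_decode [z] (fst (prod_decode z))"
    unfolding rf_fst_decode_def
    by (rule rf_eval_eq[OF rf_eval_diff[OF rf_eval_Proj0 rf_eval_triangle[OF rf_eval_decode_sum]]])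
qed

lemma rf_eval_snd_decode: "rf_eval g xs z \<Longrightarrow> rf_eval (Comp rf_snd_decode [g]) xs (snd (prod_decode z))"
proof (erule rf_eval_Comp1)
  show "rf_eval rf_snd_decode [z] (snd (prod_decode z))"
    unfolding rf_snd_decode_def
    by (rule rf_eval_eq[OF rf_eval_diff[OF rf_eval_decode_sum rf_eval_fst_decode[OF rf_eval_Proj0]]])
      simp
qed

definition rf_if_zero :: recf where
  "rf_if_zero = Prim (Proj 0) (Proj 3)"

lemma rf_eval_if_zero:
  "rf_eval g1 xs c \<Longrightarrow> rf_eval g2 xs a \<Longrightarrow> rf_eval g3 xs b \<Longrightarrow>
    rf_eval (Comp rf_if_zero [g1, g2, g3]) xs (if c = 0 then a else b)"
proof (rule rf_eval_Comp3, assumption+)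
  show "rf_eval rf_if_zero [c, a, b] (if c = 0 then a else b)"
  proof (induction c)
    case (Suc c)
    have "rf_eval (Proj 3) [if c = 0 then a else b, c, a, b] b"
      by (rule rf_eval_ProjI) simp_all
    from rf_eval.primS[OF Suc.IH[unfolded rf_if_zero_def] this] show ?case
      by (simp add: rf_if_zero_def)
  qed (auto simp: rf_if_zero_def intro: rf_eval.prim0 rf_eval_Proj0)
qed

definition rf_funpow :: "recf \<Rightarrow> recf" where
  "rf_funpow F = Prim (Proj 0) (Comp F [Proj 0])"

lemma rf_eval_funpow:
  assumes F: "\<And>y. rf_eval F [y] (f y)"
  shows "rf_eval g1 xs k \<Longrightarrow> rf_eval g2 xs z \<Longrightarrow> rf_eval (Comp (rf_funpow F) [g1, g2]) xs ((f ^^ k) z)"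
proof (rule rf_eval_Comp2, assumption+)
  show "rf_eval (rf_funpow F) [k, z] ((f ^^ k) z)"
  proof (induction k)
    case (Suc k)
    have "rf_eval (Comp F [Proj 0]) [(f ^^ k) z, k, z] ((f ^^ Suc k) z)"
      using rf_eval_Comp1[OF rf_eval_Proj0 F] by simp
    with Suc show ?case
      unfolding rf_funpow_def by (rule rf_eval.primS)
  qed (auto simp: rf_funpow_def intro: rf_eval.prim0 rf_eval_Proj0)
qed

definition code_hd :: "nat \<Rightarrow> nat" where
  "code_hd z = fst (prod_decode (z - 1))"

definition code_tl :: "nat \<Rightarrow> nat" where
  "code_tl z = snd (prod_decode (z - 1))"

definition rf_code_hd :: recf where
  "rf_code_hd = Comp rf_fst_decode [Comp rf_pred [Proj 0]]"

definition rf_code_tl :: recf where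
  "rf_code_tl = Comp rf_snd_decode [Comp rf_pred [Proj 0]]"

lemma rf_eval_code_hd: "rf_eval g xs z \<Longrightarrow> rf_eval (Comp rf_code_hd [g]) xs (code_hd z)"
  unfolding rf_code_hd_def code_hd_def
  by (erule rf_eval_Comp1) (rule rf_eval_fst_decode[OF rf_eval_pred[OF rf_eval_Proj0]])

lemma rf_eval_code_tl: "rf_eval g xs z \<Longrightarrow> rf_eval (Comp rf_code_tl [g]) xs (code_tl z)"
  unfolding rf_code_tl_def code_tl_def
  by (erule rf_eval_Comp1) (rule rf_eval_snd_decode[OF rf_eval_pred[OF rf_eval_Proj0]])

section \<open>An automaton for the words \<open>t\<^sup>-\<^sup>i x t\<^sup>j\<close>\<close>

lemma nfa_run_append: "nfa_run ts p (u @ v) q \<longleftrightarrow> (\<exists>m. nfa_run ts p u m \<and> nfa_run ts m v q)"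
  by (induction u arbitrary: p) auto

lemma nfa_run_replicate_loop: "(p, a, p) \<in> set ts \<Longrightarrow> nfa_run ts p (replicate i a) p"
  by (induction i) auto

lemma word_ok_if_nfa_accepts: "nfa_ok n A \<Longrightarrow> nfa_accepts A w \<Longrightarrow> word_ok n w"
proof -
  have "nfa_run ts p w q \<Longrightarrow> \<forall>(p, a, q) \<in> set ts. a < 2 * n \<Longrightarrow> word_ok n w" for ts p q
    by (induction w arbitrary: p) (fastforce simp: word_ok_def)+
  then show "nfa_ok n A \<Longrightarrow> nfa_accepts A w \<Longrightarrow> word_ok n w"
    by (cases A) auto
qed

lemma nfa_ok_Suc: "nfa_ok n A \<Longrightarrow> nfa_ok (Suc n) A"
  by (cases A) fastforce

lemma suffix_Cons_iff: "suffix xs (y # ys) \<longleftrightarrow> xs = y # ys \<or> suffix xs ys"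
  by (auto simp: suffix_def Cons_eq_append_conv)

text \<open>Letters \<open>2 * n\<close> and \<open>Suc (2 * n)\<close> stand for \<open>t\<close> and \<open>t\<inverse>\<close>. The state
  \<open>Suc (list_encode s)\<close> means that the suffix \<open>s\<close> of \<open>x\<close> remains to be read; the \<open>t\<close>-loop
  lives in a separate state \<open>0\<close>, reached from state \<open>1\<close> (nothing left to read), so that for
  \<open>x = []\<close> it is not shared with the \<open>t\<inverse>\<close>-loop at the initial state.\<close>

fun word_path :: "nat list \<Rightarrow> (nat \<times> nat \<times> nat) list" where
  "word_path [] = []"
| "word_path (a # s) = word_path s @ [(Suc (list_encode (a # s)), a, Suc (list_encode s))]"

lemma set_word_path:
  "(p, a, q) \<in> set (word_path x) \<longleftrightarrow>
    (\<exists>s. suffix (a # s) x \<and> p = Suc (list_encode (a # s)) \<and> q = Suc (list_encode s))"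
  by (induction x) (auto simp: suffix_Cons_iff)

definition orbit_loops :: "nat \<Rightarrow> nat \<Rightarrow> (nat \<times> nat \<times> nat) list" where
  "orbit_loops n p = [(Suc p, Suc (2 * n), Suc p), (1, 2 * n, 0), (0, 2 * n, 0)]"

definition orbit_trans :: "nat \<Rightarrow> nat list \<Rightarrow> (nat \<times> nat \<times> nat) list" where
  "orbit_trans n x = word_path x @ orbit_loops n (list_encode x)"

definition orbit_nfa :: "nat \<Rightarrow> nat list \<Rightarrow> nfa" where
  "orbit_nfa n x = (orbit_trans n x, Suc (list_encode x), [1, 0])"

lemma set_orbit_trans:
  "(p, a, q) \<in> set (orbit_trans n x) \<longleftrightarrow>
    (\<exists>s. suffix (a # s) x \<and> p = Suc (list_encode (a # s)) \<and> q = Suc (list_encode s)) \<or>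
    (p = Suc (list_encode x) \<and> a = Suc (2 * n) \<and> q = p) \<or> (p \<le> 1 \<and> a = 2 * n \<and> q = 0)"
  by (auto simp: orbit_trans_def orbit_loops_def set_word_path)

lemma nfa_run_orbit_from_0:
  "nfa_run (orbit_trans n x) 0 w q \<Longrightarrow> w = replicate (length w) (2 * n)"
  by (induction w) (auto simp: set_orbit_trans)

lemma nfa_run_orbit_from_suffix:
  "suffix s x \<Longrightarrow> nfa_run (orbit_trans n x) (Suc (list_encode s)) w q \<Longrightarrow> q \<le> 1 \<Longrightarrow>
    \<exists>i j. w = replicate i (Suc (2 * n)) @ s @ replicate j (2 * n) \<and> (i = 0 \<or> s = x)"
proof (induction w arbitrary: s)
  case Nil
  then show ?case
    by (cases s) auto
next
  case (Cons a w)
  then obtain p' where step: "(Suc (list_encode s), a, p') \<in> set (orbit_trans n x)"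
    and run: "nfa_run (orbit_trans n x) p' w q"
    by auto
  from step show ?case
    unfolding set_orbit_trans
  proof (elim disjE exE conjE)
    fix s'
    assume "suffix (a # s') x" "Suc (list_encode s) = Suc (list_encode (a # s'))"
      and p': "p' = Suc (list_encode s')"
    then have s: "s = a # s'" and "strict_suffix s' x"
      by (metis list_encode_eq nat.inject, metis suffix_ConsD')
    then have "suffix s' x" "s' \<noteq> x"
      by (simp_all add: strict_suffix_def)
    moreover obtain i j where "w = replicate i (Suc (2 * n)) @ s' @ replicate j (2 * n)" "i = 0 \<or> s' = x"
      using Cons.IH[OF \<open>suffix s' x\<close> run[unfolded p'] Cons.prems(3)] by blast
    ultimately show ?case
      by (intro exI[of _ 0] exI[of _ j]) (simp add: s)
  next
    assume "Suc (list_encode s) = Suc (list_encode x)" "a = Suc (2 * n)" "p' = Suc (list_encode s)"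
    moreover from this have "s = x"
      by (simp add: list_encode_eq)
    ultimately have "nfa_run (orbit_trans n x) (Suc (list_encode x)) w q"
      using run by simp
    then obtain i j where "w = replicate i (Suc (2 * n)) @ x @ replicate j (2 * n)"
      using Cons.IH[of x] Cons.prems(3) by blast
    with \<open>s = x\<close> \<open>a = Suc (2 * n)\<close> show ?case
      by (intro exI[of _ "Suc i"] exI[of _ j]) simp
  next
    assume "Suc (list_encode s) \<le> 1" "a = 2 * n" "p' = 0"
    moreover from this have "s = []"
      by (cases s) auto
    moreover obtain m where "w = replicate m (2 * n)"
      using nfa_run_orbit_from_0 run \<open>p' = 0\<close> by blast
    ultimately show ?case
      by (intro exI[of _ 0] exI[of _ "Suc m"]) simp
  qed
qed

lemma nfa_run_orbit_reads_suffix: "suffix s x \<Longrightarrow> nfa_run (orbit_trans n x) (Suc (list_encode s)) s 1"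
proof (induction s)
  case (Cons a s)
  then have "(Suc (list_encode (a # s)), a, Suc (list_encode s)) \<in> set (orbit_trans n x)"
    unfolding set_orbit_trans by blast
  with Cons show ?case
    using suffix_ConsD by fastforce
qed simp

lemma nfa_accepts_orbit_nfa:
  "nfa_accepts (orbit_nfa n x) w \<longleftrightarrow> (\<exists>i j. w = replicate i (Suc (2 * n)) @ x @ replicate j (2 * n))"
proof
  assume "nfa_accepts (orbit_nfa n x) w"
  then obtain q where "q \<le> 1" "nfa_run (orbit_trans n x) (Suc (list_encode x)) w q"
    by (auto simp: orbit_nfa_def)
  then show "\<exists>i j. w = replicate i (Suc (2 * n)) @ x @ replicate j (2 * n)"
    using nfa_run_orbit_from_suffix[of x x] by blast
next
  assume "\<exists>i j. w = replicate i (Suc (2 * n)) @ x @ replicate j (2 * n)"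
  then obtain i j where w: "w = replicate i (Suc (2 * n)) @ x @ replicate j (2 * n)"
    by blast
  let ?ts = "orbit_trans n x"
  have "nfa_run ?ts (Suc (list_encode x)) (replicate i (Suc (2 * n))) (Suc (list_encode x))"
    by (rule nfa_run_replicate_loop) (simp add: set_orbit_trans)
  moreover have "nfa_run ?ts (Suc (list_encode x)) x 1"
    using nfa_run_orbit_reads_suffix[of x x] by simp
  moreover obtain q where "q \<in> set [1, 0]" "nfa_run ?ts 1 (replicate j (2 * n)) q"
  proof (cases j)
    case (Suc j')
    have "nfa_run ?ts 0 (replicate j' (2 * n)) 0"
      by (rule nfa_run_replicate_loop) (simp add: set_orbit_trans)
    moreover have "(1, 2 * n, 0) \<in> set ?ts"
      by (simp add: set_orbit_trans)
    ultimately show ?thesis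
      using Suc that by auto
  qed (use that in simp)
  ultimately show "nfa_accepts (orbit_nfa n x) w"
    unfolding w orbit_nfa_def nfa_accepts.simps nfa_run_append by blast
qed

lemma orbit_nfa_ok: "word_ok n x \<Longrightarrow> nfa_ok (Suc n) (orbit_nfa n x)"
  by (fastforce simp: orbit_nfa_def word_ok_def set_orbit_trans dest: set_mono_suffix)

section \<open>Evaluation in the semidirect product\<close>

lemma eval_word_Cons: "eval_word G gens (c # w) = gen_letter G gens c \<otimes>\<^bsub>G\<^esub> eval_word G gens w"
  by (simp add: eval_word_def)

lemma sd_eval_Cons: "sd_eval G \<phi> gens (c # w) = sd_mult G \<phi> (sd_letter G gens c) (sd_eval G \<phi> gens w)"
  by (simp add: sd_eval_def)

lemma eval_word_closed:
  assumes "group G" "set gens \<subseteq> carrier G" "word_ok (length gens) w"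
  shows "eval_word G gens w \<in> carrier G"
proof -
  interpret group G
    by fact
  have "gen_letter G gens c \<in> carrier G" if "c < 2 * length gens" for c
  proof -
    have "gens ! (c div 2) \<in> carrier G"
      using that assms(2) nth_mem[of "c div 2" gens] by auto
    then show ?thesis
      by (simp add: gen_letter_def)
  qed
  then show ?thesis
    using assms(3) by (induction w) (auto simp: eval_word_def word_ok_def)
qed

lemma sd_eval_append_G_word:
  "word_ok (length gens) v \<Longrightarrow> sd_eval G \<phi> gens w = (\<one>\<^bsub>G\<^esub>, m) \<Longrightarrow>
    sd_eval G \<phi> gens (v @ w) = (eval_word G gens v, m)"
proof (induction v)
  case (Cons c v)
  then have "c div 2 \<noteq> length gens"
    by (auto simp: word_ok_def)
  with Cons show ?case
    by (auto simp: sd_eval_Cons eval_word_Cons sd_letter_def sd_mult_def aut_pow_def word_ok_def)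
qed (simp add: eval_word_def)

lemma sd_eval_G_word: "word_ok (length gens) v \<Longrightarrow> sd_eval G \<phi> gens v = (eval_word G gens v, 0)"
  using sd_eval_append_G_word[of gens v G \<phi> "[]" 0] by (simp add: sd_eval_def)

lemma sd_eval_t_power:
  assumes "group G" "\<phi> \<in> iso G G"
  shows "sd_eval G \<phi> gens (replicate j (2 * length gens)) = (\<one>\<^bsub>G\<^esub>, int j)"
proof -
  interpret group G
    by fact
  have "\<phi> \<one>\<^bsub>G\<^esub> = \<one>\<^bsub>G\<^esub>" "inj_on \<phi> (carrier G)"
    using hom_one[of \<phi> G G] assms by (auto simp: iso_iff)
  then have "inv_into (carrier G) \<phi> \<one>\<^bsub>G\<^esub> = \<one>\<^bsub>G\<^esub>"
    by (intro inv_into_f_eq) auto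
  then show ?thesis
    by (induction j) (simp_all add: sd_eval_def sd_letter_def sd_mult_def aut_pow_def)
qed

lemma sd_eval_t_inv_power_append:
  assumes "group G" "\<phi> \<in> carrier G \<rightarrow> carrier G" "g \<in> carrier G" "sd_eval G \<phi> gens w = (g, m)"
  shows "sd_eval G \<phi> gens (replicate i (Suc (2 * length gens)) @ w) = ((\<phi> ^^ i) g, m - int i)"
proof (induction i)
  case (Suc i)
  interpret group G
    by fact
  have "(\<phi> ^^ Suc i) g \<in> carrier G"
    using assms(2,3) by (induction i) auto
  with Suc show ?case
    by (simp add: sd_eval_Cons sd_letter_def sd_mult_def aut_pow_def)
qed (simp add: assms(4))

lemma sd_eval_orbit_word:
  assumes "group G" "set gens \<subseteq> carrier G" "\<phi> \<in> iso G G" "word_ok (length gens) x"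
  shows "sd_eval G \<phi> gens (replicate i (Suc (2 * length gens)) @ x @ replicate j (2 * length gens)) =
    ((\<phi> ^^ i) (eval_word G gens x), int j - int i)"
proof -
  have "\<phi> \<in> carrier G \<rightarrow> carrier G"
    using assms(3) by (auto simp: iso_def hom_def)
  moreover have "sd_eval G \<phi> gens (x @ replicate j (2 * length gens)) = (eval_word G gens x, int j)"
    by (rule sd_eval_append_G_word[OF assms(4) sd_eval_t_power[OF assms(1,3)]])
  ultimately show ?thesis
    using sd_eval_t_inv_power_append[OF assms(1) _ eval_word_closed[OF assms(1,2,4)]] by simp
qed

lemma sd_rat_set_orbit_nfa:
  assumes "group G" "set gens \<subseteq> carrier G" "\<phi> \<in> iso G G" "word_ok (length gens) x"
  shows "sd_rat_set G \<phi> gens (orbit_nfa (length gens) x) =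
    (\<lambda>(i, j). ((\<phi> ^^ i) (eval_word G gens x), int j - int i)) ` UNIV"
proof -
  let ?w = "\<lambda>(i, j). replicate i (Suc (2 * length gens)) @ x @ replicate j (2 * length gens)"
  have accepted: "{w. nfa_accepts (orbit_nfa (length gens) x) w} = ?w ` UNIV"
    by (auto simp: nfa_accepts_orbit_nfa)
  show ?thesis
    unfolding sd_rat_set_def accepted image_image by (simp add: sd_eval_orbit_word[OF assms] case_prod_beta)
qed

lemma sd_rat_set_eq_rat_set:
  "nfa_ok (length gens) K \<Longrightarrow> sd_rat_set G \<phi> gens K = (\<lambda>g. (g, 0)) ` rat_set G gens K"
  by (auto simp: sd_rat_set_def rat_set_def sd_eval_G_word word_ok_if_nfa_accepts image_iff)

lemma orbit_nfa_meets_iff: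
  assumes "group G" "set gens \<subseteq> carrier G" "\<phi> \<in> iso G G"
    and "nfa_ok (length gens) K" "word_ok (length gens) x"
  shows "sd_rat_set G \<phi> gens (orbit_nfa (length gens) x) \<inter> sd_rat_set G \<phi> gens K \<noteq> {} \<longleftrightarrow>
    (\<exists>k::nat. (\<phi> ^^ k) (eval_word G gens x) \<in> rat_set G gens K)"
proof -
  let ?O = "(\<lambda>(i, j). ((\<phi> ^^ i) (eval_word G gens x), int j - int i)) ` UNIV"
  let ?K = "(\<lambda>g. (g, 0)) ` rat_set G gens K"
  have "?O \<inter> ?K \<noteq> {} \<longleftrightarrow> (\<exists>k::nat. (\<phi> ^^ k) (eval_word G gens x) \<in> rat_set G gens K)"
  proof
    assume "?O \<inter> ?K \<noteq> {}"
    then show "\<exists>k::nat. (\<phi> ^^ k) (eval_word G gens x) \<in> rat_set G gens K"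
      by auto
  next
    assume "\<exists>k::nat. (\<phi> ^^ k) (eval_word G gens x) \<in> rat_set G gens K"
    then obtain k where "(\<phi> ^^ k) (eval_word G gens x) \<in> rat_set G gens K"
      by blast
    then have "((\<phi> ^^ k) (eval_word G gens x), 0) \<in> ?O \<inter> ?K"
      by (auto intro: image_eqI[of _ _ "(k, k)"])
    then show "?O \<inter> ?K \<noteq> {}"
      by blast
  qed
  then show ?thesis
    unfolding sd_rat_set_orbit_nfa[OF assms(1-3,5)] sd_rat_set_eq_rat_set[OF assms(4)] .
qed

section \<open>Computing the reduction\<close>

definition enc_trans :: "nat \<times> nat \<times> nat \<Rightarrow> nat" where
  "enc_trans = (\<lambda>(p, a, q). prod_encode (p, prod_encode (a, q)))"

lemma enc_nfa_eq:
  "enc_nfa (ts, q0, fs) = prod_encode (list_encode (map enc_trans ts), prod_encode (q0, list_encode fs))"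
  by (simp add: enc_trans_def)

text \<open>One step of building \<open>word_path x\<close>: the argument pairs the code of the suffix still to be
  processed with the code of the transitions built so far. Prepending while walking down the
  suffixes is why \<open>word_path\<close> lists the transition for \<open>x\<close> itself last.\<close>

definition path_step :: "nat \<Rightarrow> nat" where
  "path_step z = (let r = fst (prod_decode z) in
     if r = 0 then z
     else prod_encode (code_tl r,
       Suc (prod_encode (enc_trans (Suc r, code_hd r, Suc (code_tl r)), snd (prod_decode z)))))"

lemma funpow_path_step:
  "length x \<le> k \<Longrightarrow>
    (path_step ^^ k) (prod_encode (list_encode x, list_encode (map enc_trans ts))) =
    prod_encode (0, list_encode (map enc_trans (word_path x @ ts)))"
proof (induction x arbitrary: k ts)
  case Nil
  have "(path_step ^^ k) (prod_encode (0, c)) = prod_encode (0, c)" for c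
    by (induction k) (simp_all add: path_step_def)
  then show ?case
    by simp
next
  case (Cons a s)
  then obtain k' where k: "k = Suc k'" "length s \<le> k'"
    by (cases k) auto
  have step: "path_step (prod_encode (list_encode (a # s), list_encode (map enc_trans ts))) =
      prod_encode (list_encode s, list_encode (map enc_trans ((Suc (list_encode (a # s)), a, Suc (list_encode s)) # ts)))"
    by (simp add: path_step_def code_hd_def code_tl_def)
  show ?case
    unfolding k(1) funpow_Suc_right comp_def step Cons.IH[OF k(2)] by simp
qed

definition rf_enc_trans :: recf where
  "rf_enc_trans = Comp rf_prod_encode [Proj 0, Comp rf_prod_encode [Proj 1, Proj 2]]"

lemma rf_eval_enc_trans:
  "rf_eval g1 xs p \<Longrightarrow> rf_eval g2 xs a \<Longrightarrow> rf_eval g3 xs q \<Longrightarrow>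
    rf_eval (Comp rf_enc_trans [g1, g2, g3]) xs (enc_trans (p, a, q))"
  unfolding rf_enc_trans_def enc_trans_def case_prod_conv
  by (rule rf_eval_Comp3, assumption+)
    (intro rf_eval_prod_encode rf_eval_Proj0 rf_eval_Proj1 rf_eval_Proj2)

definition rf_path_step :: recf where
  "rf_path_step =
    (let r = Comp rf_fst_decode [Proj 0] in
     Comp rf_if_zero [r, Proj 0,
       Comp rf_prod_encode [Comp rf_code_tl [r],
         Comp Succ [Comp rf_prod_encode
           [Comp rf_enc_trans [Comp Succ [r], Comp rf_code_hd [r], Comp Succ [Comp rf_code_tl [r]]],
            Comp rf_snd_decode [Proj 0]]]]])"

lemma rf_eval_path_step: "rf_eval rf_path_step [z] (path_step z)"
  unfolding rf_path_step_def path_step_def Let_def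
  by (intro rf_eval_if_zero rf_eval_fst_decode rf_eval_Proj0 rf_eval_prod_encode rf_eval_code_tl
      rf_eval_Succ rf_eval_enc_trans rf_eval_code_hd rf_eval_snd_decode)

lemma length_le_list_encode: "length x \<le> list_encode x"
proof (induction x)
  case (Cons a x)
  then show ?case
    using le_prod_encode_2[of "list_encode x" a] by simp
qed simp

lemma enc_orbit_nfa:
  "enc_nfa (orbit_nfa n x) =
    prod_encode (snd (prod_decode ((path_step ^^ list_encode x)
        (prod_encode (list_encode x, list_encode (map enc_trans (orbit_loops n (list_encode x))))))),
      prod_encode (Suc (list_encode x), list_encode [1, 0]))"
  unfolding orbit_nfa_def orbit_trans_def enc_nfa_eq funpow_path_step[OF length_le_list_encode]
  by simp

definition rf_orbit_loops :: "nat \<Rightarrow> recf" where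
  "rf_orbit_loops n =
    Comp Succ [Comp rf_prod_encode
      [Comp rf_enc_trans [Comp Succ [Proj 0], rf_const (Suc (2 * n)), Comp Succ [Proj 0]],
       rf_const (list_encode (map enc_trans [(1, 2 * n, 0), (0, 2 * n, 0)]))]]"

lemma rf_eval_orbit_loops:
  "rf_eval g xs p \<Longrightarrow> rf_eval (Comp (rf_orbit_loops n) [g]) xs (list_encode (map enc_trans (orbit_loops n p)))"
  unfolding rf_orbit_loops_def orbit_loops_def
  by (erule rf_eval_Comp1)
    (rule rf_eval_eq[OF rf_eval_Succ[OF rf_eval_prod_encode[OF
        rf_eval_enc_trans[OF rf_eval_Succ[OF rf_eval_Proj0] rf_eval_const rf_eval_Succ[OF rf_eval_Proj0]]
        rf_eval_const]]], simp)

definition rf_orbit_nfa :: "nat \<Rightarrow> recf" where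
  "rf_orbit_nfa n =
    Comp rf_prod_encode
      [Comp rf_snd_decode [Comp (rf_funpow rf_path_step)
         [Proj 0, Comp rf_prod_encode [Proj 0, Comp (rf_orbit_loops n) [Proj 0]]]],
       Comp rf_prod_encode [Comp Succ [Proj 0], rf_const (list_encode [1, 0])]]"

lemma rf_eval_orbit_nfa:
  "rf_eval g xs (list_encode x) \<Longrightarrow> rf_eval (Comp (rf_orbit_nfa n) [g]) xs (enc_nfa (orbit_nfa n x))"
  unfolding rf_orbit_nfa_def enc_orbit_nfa
  by (erule rf_eval_Comp1)
    (intro rf_eval_prod_encode rf_eval_snd_decode rf_eval_funpow[OF rf_eval_path_step] rf_eval_Proj0
      rf_eval_orbit_loops rf_eval_Succ rf_eval_const)

definition rf_reduction :: "nat \<Rightarrow> recf" where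
  "rf_reduction n =
    Comp rf_prod_encode
      [Comp rf_fst_decode [Comp rf_snd_decode [Proj 0]],
       Comp rf_prod_encode
         [Comp (rf_orbit_nfa n) [Comp rf_snd_decode [Comp rf_snd_decode [Proj 0]]],
          Comp rf_fst_decode [Proj 0]]]"

lemma rf_eval_reduction:
  "rf_eval (rf_reduction n) [prod_encode (enc_nfa K, prod_encode (enc_aut ws, list_encode x))]
    (prod_encode (enc_aut ws, prod_encode (enc_nfa (orbit_nfa n x), enc_nfa K)))"
proof -
  let ?z = "prod_encode (enc_nfa K, prod_encode (enc_aut ws, list_encode x))"
  have K: "rf_eval (Comp rf_fst_decode [Proj 0]) [?z] (enc_nfa K)"
    using rf_eval_fst_decode[OF rf_eval_Proj0, of ?z] by simp
  have ws_x: "rf_eval (Comp rf_snd_decode [Proj 0]) [?z] (prod_encode (enc_aut ws, list_encode x))"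
    using rf_eval_snd_decode[OF rf_eval_Proj0, of ?z] by simp
  have ws: "rf_eval (Comp rf_fst_decode [Comp rf_snd_decode [Proj 0]]) [?z] (enc_aut ws)"
    using rf_eval_fst_decode[OF ws_x] by simp
  have x: "rf_eval (Comp rf_snd_decode [Comp rf_snd_decode [Proj 0]]) [?z] (list_encode x)"
    using rf_eval_snd_decode[OF ws_x] by simp
  show ?thesis
    unfolding rf_reduction_def
    by (intro rf_eval_prod_encode ws rf_eval_orbit_nfa[OF x] K)
qed

theorem proposition5p2:
  fixes G :: "('a, 'b) monoid_scheme" and gens :: "'a list"
  assumes "group G"
    and "set gens \<subseteq> carrier G"
    and "generate G (set gens) = carrier G"
    and "IP_Rat_sd_decidable G gens"
  shows "GBrP_Rat_decidable G gens"
proof -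
  from assms(4) obtain M where M: "\<forall>\<phi> ws A B.
     represents G gens ws \<phi> \<and> nfa_ok (Suc (length gens)) A \<and> nfa_ok (Suc (length gens)) B \<longrightarrow>
     rf_eval M [prod_encode (enc_aut ws, prod_encode (enc_nfa A, enc_nfa B))]
       (if sd_rat_set G \<phi> gens A \<inter> sd_rat_set G \<phi> gens B \<noteq> {} then 1 else 0)"
    unfolding IP_Rat_sd_decidable_def by blast
  have "rf_eval (Comp M [rf_reduction (length gens)])
      [prod_encode (enc_nfa K, prod_encode (enc_aut ws, list_encode x))]
      (if \<exists>k::nat. (\<phi> ^^ k) (eval_word G gens x) \<in> rat_set G gens K then 1 else 0)"
    if K: "nfa_ok (length gens) K" and \<phi>: "represents G gens ws \<phi>" and x: "word_ok (length gens) x"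
    for K \<phi> ws x
  proof -
    have "\<phi> \<in> iso G G"
      using \<phi> by (simp add: represents_def)
    note meets_iff = orbit_nfa_meets_iff[OF assms(1,2) this K x]
    have "rf_eval M
        [prod_encode (enc_aut ws, prod_encode (enc_nfa (orbit_nfa (length gens) x), enc_nfa K))]
        (if sd_rat_set G \<phi> gens (orbit_nfa (length gens) x) \<inter> sd_rat_set G \<phi> gens K \<noteq> {} then 1 else 0)"
      using M \<phi> orbit_nfa_ok[OF x] nfa_ok_Suc[OF K] by blast
    then show ?thesis
      unfolding meets_iff by (rule rf_eval_Comp1[OF rf_eval_reduction])
  qed
  then show ?thesis
    unfolding GBrP_Rat_decidable_def by blast
qed

end
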